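(* Let $G,H$ be non-discrete unimodular lcsc compactly generated groups, $(\Omega,X_G,X_H,\mu)$ a measure equivalence coupling with cocycle $\alpha\colon G\times X_H\to H$, and $p\ge1$. Assume $$C_p:=\int_{S_G}\int_{X_H}|\alpha(s^{-1},x)|_H^p\,d\nu_H(x)\,d\lambda_G(s)<\infty.$$ Then for every $f\in\mathrm{L}^p(H)$ with support of finite measure, $$\int_{X_G}\|\nabla^{\mathrm{int}}_Gf_x\|_p^p\,d\nu_G(x)\le C_p\|\nabla^{\sup}_Hf\|_p^p.$$
   Context: Measure equivalence coupling: measure space $(\Omega,\mu)$ with commuting measure-preserving $G$- and $H$-actions (written $\ast$), subsets $X_G,X_H$ with finite measures $\nu_G,\nu_H$ such that $(g,x)\mapsto g\ast x$ is a measure space isomorphism $(G\times X_G,\lambda_G\otimes\nu_G)\to(\Omega,\mu)$ and likewise for $H\times X_H$. $\alpha(g,x)\ast g\ast x$ is the unique point of $(H\ast g\ast x)\cap X_H$. $S_G,S_H$ are compact generating sets, $|\cdot|_H$ the word length, $\lambda(s)u(g)=u(s^{-1}g)$, $\|\nabla^{\mathrm{int}}_Gu\|_p^p=\int_{S_G}\|u-\lambda(s)u\|_p^p\,d\lambda_G(s)$, $\|\nabla^{\sup}_Hf\|_p=\sup_{s\in S_H}\|f-\lambda(s)f\|_p$. Given $f\colon H\to\mathbb{R}$: $\tilde f(h\ast x)=f(h^{-1})$ ($h\in H,x\in X_H$), $f_x(g)=\tilde f(g\ast x)$ ($x\in X_G,g\in G$). *)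

theory Defs
  imports "HOL-Analysis.Analysis"
begin

text \<open>Groups are written additively (class group_add, not necessarily commutative):
  the product g h is g + h, the inverse g^{-1} is - g, the identity is 0.\<close>

definition lcsc_group :: "'g::{topological_group_add, t2_space, second_countable_topology} itself \<Rightarrow> bool" where
  "lcsc_group _ \<longleftrightarrow> locally_compact_space (euclidean :: 'g topology)"

definition non_discrete_group :: "'g::{topological_group_add} itself \<Rightarrow> bool" where
  "non_discrete_group _ \<longleftrightarrow> \<not> open {0::'g}"

definition haar_measure :: "'g::topological_group_add measure \<Rightarrow> bool" where
  "haar_measure M \<longleftrightarrow> sets M = sets borel \<and>
     (\<forall>g. \<forall>A\<in>sets borel. emeasure M ((+) g ` A) = emeasure M A) \<and>
     (\<forall>K. compact K \<longrightarrow> emeasure M K < \<infinity>) \<and>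
     (\<forall>U. open U \<and> U \<noteq> {} \<longrightarrow> emeasure M U > 0)"

definition unimodular_haar :: "'g::topological_group_add measure \<Rightarrow> bool" where
  "unimodular_haar M \<longleftrightarrow> haar_measure M \<and>
     (\<forall>g. \<forall>A\<in>sets borel. emeasure M ((\<lambda>x. x + g) ` A) = emeasure M A)"

definition words :: "'g::group_add set \<Rightarrow> nat \<Rightarrow> 'g set" where
  "words S n = {sum_list ws | ws. length ws = n \<and> set ws \<subseteq> S \<union> uminus ` S}"

definition generates :: "'g::group_add set \<Rightarrow> bool" where
  "generates S \<longleftrightarrow> (\<forall>g. \<exists>n. g \<in> words S n)"

definition compact_generating_set :: "'g::{topological_group_add} set \<Rightarrow> bool" where
  "compact_generating_set S \<longleftrightarrow> compact S \<and> generates S"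

definition word_length :: "'g::group_add set \<Rightarrow> 'g \<Rightarrow> nat" where
  "word_length S g = (LEAST n. g \<in> words S n)"

definition ltrans :: "'g::group_add \<Rightarrow> ('g \<Rightarrow> real) \<Rightarrow> 'g \<Rightarrow> real" where
  "ltrans s u g = u (- s + g)"

definition measure_iso :: "'a measure \<Rightarrow> 'b measure \<Rightarrow> ('a \<Rightarrow> 'b) \<Rightarrow> bool" where
  "measure_iso A B F \<longleftrightarrow> bij_betw F (space A) (space B) \<and> F \<in> A \<rightarrow>\<^sub>M B \<and>
     the_inv_into (space A) F \<in> B \<rightarrow>\<^sub>M A \<and> distr A B F = B"

definition mp_action :: "'w measure \<Rightarrow> ('g::topological_group_add \<Rightarrow> 'w \<Rightarrow> 'w) \<Rightarrow> bool" where
  "mp_action \<mu> act \<longleftrightarrow>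
     (\<forall>\<omega>\<in>space \<mu>. act 0 \<omega> = \<omega>) \<and>
     (\<forall>g h. \<forall>\<omega>\<in>space \<mu>. act (g + h) \<omega> = act g (act h \<omega>)) \<and>
     (\<lambda>(g, \<omega>). act g \<omega>) \<in> (borel \<Otimes>\<^sub>M \<mu>) \<rightarrow>\<^sub>M \<mu> \<and>
     (\<forall>g. act g \<in> \<mu> \<rightarrow>\<^sub>M \<mu> \<and> distr \<mu> \<mu> (act g) = \<mu>)"

text \<open>Measure equivalence coupling (Omega, X_G, X_H, mu) with actions gact, hact and
  finite measures nuG, nuH on X_G, X_H.\<close>
definition me_coupling ::
  "'g::topological_group_add measure \<Rightarrow> 'h::topological_group_add measure \<Rightarrow> 'w measure \<Rightarrow>
   ('g \<Rightarrow> 'w \<Rightarrow> 'w) \<Rightarrow> ('h \<Rightarrow> 'w \<Rightarrow> 'w) \<Rightarrow> 'w measure \<Rightarrow> 'w measure \<Rightarrow> bool" where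
  "me_coupling lG lH \<mu> gact hact nuG nuH \<longleftrightarrow>
     mp_action \<mu> gact \<and> mp_action \<mu> hact \<and>
     (\<forall>g h. \<forall>\<omega>\<in>space \<mu>. gact g (hact h \<omega>) = hact h (gact g \<omega>)) \<and>
     space nuG \<subseteq> space \<mu> \<and> space nuH \<subseteq> space \<mu> \<and>
     finite_measure nuG \<and> finite_measure nuH \<and>
     measure_iso (lG \<Otimes>\<^sub>M nuG) \<mu> (\<lambda>(g, x). gact g x) \<and>
     measure_iso (lH \<Otimes>\<^sub>M nuH) \<mu> (\<lambda>(h, x). hact h x)"

definition cocycle :: "('g \<Rightarrow> 'w \<Rightarrow> 'w) \<Rightarrow> ('h \<Rightarrow> 'w \<Rightarrow> 'w) \<Rightarrow> 'w set \<Rightarrow> 'g \<Rightarrow> 'w \<Rightarrow> 'h" where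
  "cocycle gact hact XH g x = (THE h. hact h (gact g x) \<in> XH)"

definition ftilde :: "('h::group_add \<Rightarrow> 'w \<Rightarrow> 'w) \<Rightarrow> 'w set \<Rightarrow> ('h \<Rightarrow> real) \<Rightarrow> 'w \<Rightarrow> real" where
  "ftilde hact XH f \<omega> = f (- (THE h. \<exists>x\<in>XH. \<omega> = hact h x))"

definition fx :: "('g \<Rightarrow> 'w \<Rightarrow> 'w) \<Rightarrow> ('h::group_add \<Rightarrow> 'w \<Rightarrow> 'w) \<Rightarrow> 'w set \<Rightarrow> ('h \<Rightarrow> real) \<Rightarrow> 'w \<Rightarrow> 'g \<Rightarrow> real" where
  "fx gact hact XH f x g = ftilde hact XH f (gact g x)"

definition lp_pow :: "'a measure \<Rightarrow> real \<Rightarrow> ('a \<Rightarrow> real) \<Rightarrow> ennreal" where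
  "lp_pow M p u = (\<integral>\<^sup>+ g. ennreal (\<bar>u g\<bar> powr p) \<partial>M)"

text \<open>L^p norm (real-valued; meaningful for u in L^p).\<close>
definition lp_norm :: "'a measure \<Rightarrow> real \<Rightarrow> ('a \<Rightarrow> real) \<Rightarrow> real" where
  "lp_norm M p u = enn2real (lp_pow M p u) powr (1 / p)"

definition grad_int_pow :: "'g::group_add measure \<Rightarrow> 'g set \<Rightarrow> real \<Rightarrow> ('g \<Rightarrow> real) \<Rightarrow> ennreal" where
  "grad_int_pow lG S p u = (\<integral>\<^sup>+ s. indicator S s * lp_pow lG p (\<lambda>g. u g - ltrans s u g) \<partial>lG)"

definition grad_sup :: "'h::group_add measure \<Rightarrow> 'h set \<Rightarrow> real \<Rightarrow> ('h \<Rightarrow> real) \<Rightarrow> real" where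
  "grad_sup lH S p f = (SUP s\<in>S. lp_norm lH p (\<lambda>h. f h - ltrans s f h))"

end

theory Submission
  imports Defs
begin

(* Write F for the function f~ on Omega and fix s in S_G. Since (g, x) |-> g * x identifies G x X_G
   with Omega, the integral over X_G of ||f_x - lambda(s) f_x||_p^p is the integral over Omega of
   |F - F(s^{-1} * .)|^p. Reading the same integral through H x X_H, where
   F(s^{-1} h y) = f(alpha(s^{-1}, y) h^{-1}), and using that the Haar measure of the unimodular
   group H is inversion invariant, it becomes the integral over y in X_H of
   ||f - f(alpha(s^{-1}, y) .)||_p^p. Writing alpha(s^{-1}, y) as a word of length n in S_H and
   applying the triangle inequality with the convexity weights (n+1)/n and n+1 letter by letter
   bounds this by n^p ||grad^sup_H f||_p^p. Integrating over s in S_G (Fubini) gives the claim. *)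

lemma borel_measurable_uminus_group [measurable (raw)]:
  fixes g :: "'a \<Rightarrow> 'b::{second_countable_topology, topological_group_add}"
  assumes "g \<in> borel_measurable M"
  shows "(\<lambda>x. - g x) \<in> borel_measurable M"
  by (rule borel_measurable_continuous_on[OF _ assms]) (intro continuous_intros)

(* Unlike nn_integral_cmult this needs no measurability of f: nothing is known about the
   measurability of the cocycle. *)
lemma nn_integral_cmult_finite:
  assumes c: "c \<noteq> (\<infinity>::ennreal)"
  shows "(\<integral>\<^sup>+x. c * f x \<partial>M) = c * integral\<^sup>N M f"
proof (cases "c = 0")
  case False
  have cancel: "c * (a / c) = a" "(c * a) / c = a" for a
    using False c by (simp_all add: ennreal_times_divide mult.commute[of c] mult_divide_eq_ennreal)
  have below: "{g. simple_function M g \<and> g \<le> (\<lambda>x. c * f x)}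
      = (\<lambda>g x. c * g x) ` {g. simple_function M g \<and> g \<le> f}"
  proof (intro set_eqI iffI)
    fix g assume g: "g \<in> {g. simple_function M g \<and> g \<le> (\<lambda>x. c * f x)}"
    have "g x / c \<le> f x" for x
      using divide_right_mono_ennreal[of "g x" "c * f x" c] g by (auto simp: le_fun_def cancel)
    moreover have "simple_function M (\<lambda>x. g x / c)"
      using g by (auto simp: divide_ennreal_def)
    ultimately show "g \<in> (\<lambda>g x. c * g x) ` {g. simple_function M g \<and> g \<le> f}"
      by (intro image_eqI[where x="\<lambda>x. g x / c"]) (auto simp: cancel le_fun_def)
  qed (auto simp: le_fun_def mult_left_mono)
  show ?thesis
    unfolding nn_integral_def below image_image SUP_mult_left_ennreal
    by (intro SUP_cong refl) simp
qed simp

lemma nn_integral_multc_finite: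
  "c \<noteq> (\<infinity>::ennreal) \<Longrightarrow> (\<integral>\<^sup>+x. f x * c \<partial>M) = integral\<^sup>N M f * c"
  using nn_integral_cmult_finite[where c=c and f=f and M=M] by (simp add: mult.commute)

section \<open>Haar measures\<close>

lemma haar_measure_sets: "haar_measure M \<Longrightarrow> sets M = sets borel"
  by (simp add: haar_measure_def)

lemma haar_measure_space: "haar_measure M \<Longrightarrow> space M = UNIV"
  using sets_eq_imp_space_eq[OF haar_measure_sets] by simp

lemma nn_integral_bij_invariant:
  assumes M: "sets M = sets borel" and T: "T \<in> borel_measurable borel"
    and TS: "\<And>x. T (S x) = x" and ST: "\<And>x. S (T x) = x"
    and S: "\<And>A. A \<in> sets borel \<Longrightarrow> emeasure M (S ` A) = emeasure M A"
    and F: "F \<in> borel_measurable borel"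
  shows "(\<integral>\<^sup>+h. F (T h) \<partial>M) = (\<integral>\<^sup>+h. F h \<partial>M)"
proof -
  have T': "T \<in> M \<rightarrow>\<^sub>M M" and F': "F \<in> borel_measurable M"
    using T F by (simp only: measurable_cong_sets[OF M M], simp only: measurable_cong_sets[OF M refl])
  have "T -` A \<inter> space M = S ` A" for A
    using sets_eq_imp_space_eq[OF M] TS ST by (auto intro: rev_image_eqI[of "T x" _ x for x])
  then have "distr M M T = M"
    using M by (intro measure_eqI) (simp_all add: emeasure_distr[OF T'] S)
  then show ?thesis
    using nn_integral_distr[OF T', of F] F' by simp
qed

lemma nn_integral_haar_left_translate:
  fixes M :: "'g::topological_group_add measure"
  assumes "haar_measure M" and "F \<in> borel_measurable borel"
  shows "(\<integral>\<^sup>+h. F (g + h) \<partial>M) = (\<integral>\<^sup>+h. F h \<partial>M)"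
  using assms
  by (intro nn_integral_bij_invariant[where S="(+) (- g)"])
    (auto simp: haar_measure_def add.assoc[symmetric] intro!: borel_measurable_continuous_onI continuous_intros)

lemma nn_integral_unimodular_right_translate:
  fixes M :: "'g::topological_group_add measure"
  assumes "unimodular_haar M" and "F \<in> borel_measurable borel"
  shows "(\<integral>\<^sup>+h. F (h + g) \<partial>M) = (\<integral>\<^sup>+h. F h \<partial>M)"
  using assms
  by (intro nn_integral_bij_invariant[where S="\<lambda>h. h + - g"])
    (auto simp: unimodular_haar_def haar_measure_def add.assoc simp del: add_uminus_conv_diff intro!: borel_measurable_continuous_onI continuous_intros)

lemma haar_measure_sigma_finite:
  fixes M :: "'g::{topological_group_add, t2_space, second_countable_topology} measure"
  assumes L: "lcsc_group TYPE('g)" and H: "haar_measure M"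
  shows "sigma_finite_measure M"
proof -
  have "\<exists>U. open U \<and> x \<in> U \<and> emeasure M U < \<infinity>" for x :: 'g
  proof -
    have "\<exists>U K. open U \<and> compact K \<and> x \<in> U \<and> U \<subseteq> K"
      using L unfolding lcsc_group_def locally_compact_space_def by simp
    then obtain U K where UK: "open U" "compact K" "x \<in> U" "U \<subseteq> K"
      by blast
    then have "emeasure M U \<le> emeasure M K"
      by (intro emeasure_mono) (auto simp: haar_measure_sets[OF H] borel_compact)
    also have "\<dots> < \<infinity>" using H UK(2) by (simp add: haar_measure_def)
    finally show ?thesis using UK by blast
  qed
  then obtain U where U: "\<And>x. open (U x)" "\<And>x. x \<in> U x" "\<And>x. emeasure M (U x) < \<infinity>"
    by metis
  obtain C where C: "C \<subseteq> range U" "countable C" "\<Union>C = \<Union>(range U)"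
    using Lindelof[of "range U"] U(1) by auto
  have "\<forall>a\<in>C. emeasure M a \<noteq> \<infinity>"
    using C(1) U(3) by (auto simp: less_top subset_eq)
  then show ?thesis
    using C U(1,2) haar_measure_sets[OF H] haar_measure_space[OF H]
    by unfold_locales (intro exI[of _ C]; auto)
qed

lemma haar_measure_obtain_finite_positive:
  fixes M :: "'g::topological_group_add measure"
  assumes H: "haar_measure M" and "sigma_finite_measure M"
  obtains A where "A \<in> sets M" "0 < emeasure M A" "emeasure M A < \<infinity>"
proof -
  interpret sigma_finite_measure M by fact
  obtain B :: "nat \<Rightarrow> 'g set"
    where B: "range B \<subseteq> sets M" "(\<Union>i. B i) = space M" "\<And>i. emeasure M (B i) \<noteq> \<infinity>"
    using sigma_finite by blast
  have "emeasure M (\<Union>i. B i) \<noteq> 0"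
    using H B(2) haar_measure_space[OF H] open_UNIV UNIV_not_empty
    unfolding haar_measure_def by (metis not_gr_zero)
  then obtain i where "emeasure M (B i) \<noteq> 0"
    using B(1) emeasure_UN_eq_0[where N=B and M=M] by auto
  then show ?thesis
    using B by (intro that[of "B i"]) (auto simp: less_top zero_less_iff_neq_zero)
qed

text \<open>Integrate \<open>F (- h) * w (h + k)\<close>, for a weight \<open>w\<close> of finite positive mass, in both
  orders, substituting \<open>h \<mapsto> h - k\<close> in between.\<close>

lemma nn_integral_unimodular_uminus:
  fixes M :: "'g::{topological_group_add, second_countable_topology} measure"
  assumes U: "unimodular_haar M" and "sigma_finite_measure M" and F[measurable]: "F \<in> borel_measurable borel"
  shows "(\<integral>\<^sup>+h. F (- h) \<partial>M) = (\<integral>\<^sup>+h. F h \<partial>M)"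
proof -
  have H: "haar_measure M" using U by (simp add: unimodular_haar_def)
  have S: "sets M = sets borel" by (rule haar_measure_sets[OF H])
  interpret pair_sigma_finite M M using assms(2) by (simp add: pair_sigma_finite_def)
  obtain A where A: "A \<in> sets M" "0 < emeasure M A" "emeasure M A < \<infinity>"
    using haar_measure_obtain_finite_positive[OF H assms(2)] by blast
  define w :: "'g \<Rightarrow> ennreal" where "w = indicator A"
  have wm[measurable]: "w \<in> borel_measurable borel"
    using A(1) unfolding S w_def by (rule borel_measurable_indicator)
  have mass: "(\<integral>\<^sup>+k. w (h + k) \<partial>M) = emeasure M A" for h
    using nn_integral_haar_left_translate[OF H wm, of h] nn_integral_indicator[OF A(1)]
    by (simp only: w_def)
  note borel = measurable_cong_sets[OF S refl] measurable_cong_sets[OF sets_pair_measure_cong[OF S S] refl]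
  have Fw: "(\<lambda>(h, k). F (- h) * w (h + k)) \<in> borel_measurable (M \<Otimes>\<^sub>M M)"
    unfolding borel by measurable
  have Fw': "(\<lambda>(h, k). F (k + - h) * w h) \<in> borel_measurable (M \<Otimes>\<^sub>M M)"
    unfolding borel by measurable
  have [measurable]: "(\<lambda>h. F (- h)) \<in> borel_measurable M"
    unfolding borel by measurable
  have [measurable]: "(\<lambda>k. w (h + k)) \<in> borel_measurable M"
    and F_shift: "(\<lambda>k. F (k + - h)) \<in> borel_measurable M" for h
    unfolding borel by (measurable, measurable)
  have "(\<integral>\<^sup>+h. F (- h) \<partial>M) * emeasure M A = (\<integral>\<^sup>+h. F (- h) * emeasure M A \<partial>M)"
    by (simp add: nn_integral_multc)
  also have "\<dots> = (\<integral>\<^sup>+h. (\<integral>\<^sup>+k. F (- h) * w (h + k) \<partial>M) \<partial>M)"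
    by (simp add: nn_integral_cmult mass)
  also have "\<dots> = (\<integral>\<^sup>+k. (\<integral>\<^sup>+h. F (- h) * w (h + k) \<partial>M) \<partial>M)"
    by (rule Fubini'[symmetric, OF Fw])
  also have "\<dots> = (\<integral>\<^sup>+k. (\<integral>\<^sup>+h. F (k + - h) * w h \<partial>M) \<partial>M)"
  proof (rule nn_integral_cong)
    fix k
    have "(\<lambda>h. F (- h) * w (h + k)) \<in> borel_measurable borel" by measurable
    from nn_integral_unimodular_right_translate[OF U this, of "- k"]
    show "(\<integral>\<^sup>+h. F (- h) * w (h + k) \<partial>M) = (\<integral>\<^sup>+h. F (k + - h) * w h \<partial>M)"
      by (simp add: minus_add add.assoc)
  qed
  also have "\<dots> = (\<integral>\<^sup>+h. (\<integral>\<^sup>+k. F (k + - h) * w h \<partial>M) \<partial>M)"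
    by (rule Fubini'[OF Fw'])
  also have "\<dots> = (\<integral>\<^sup>+h. (\<integral>\<^sup>+k. F k \<partial>M) * w h \<partial>M)"
    by (simp only: nn_integral_multc[OF F_shift] nn_integral_unimodular_right_translate[OF U F])
  also have "\<dots> = (\<integral>\<^sup>+h. F h \<partial>M) * emeasure M A"
    using A(1) by (simp add: nn_integral_cmult w_def)
  finally show ?thesis
    using A(2,3) by (auto simp: mult.commute[of _ "emeasure M A"] ennreal_mult_cancel_left)
qed

section \<open>Translation differences along words\<close>

lemma powr_add_le_weighted:
  fixes a b u v p :: real
  assumes a: "a \<ge> 0" and b: "b \<ge> 0" and u: "u > 0" and v: "v > 0" and uv: "1/u + 1/v = 1"
    and p: "p \<ge> 1"
  shows "(a + b) powr p \<le> u powr (p - 1) * a powr p + v powr (p - 1) * b powr p"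
proof -
  have "1/u \<le> 1" "1/v \<le> 1" using u v uv by (smt (verit) divide_pos_pos)+
  then have U: "u powr (p - 1) \<ge> 1" and V: "v powr (p - 1) \<ge> 1"
    using u v p by (auto intro!: ge_one_powr_ge_zero simp: divide_le_eq_1)
  consider "a = 0" | "b = 0" | "a > 0" "b > 0" using a b by linarith
  then show ?thesis
  proof cases
    case 1
    then show ?thesis using mult_right_mono[OF V, of "b powr p"] by simp
  next
    case 2
    then show ?thesis using mult_right_mono[OF U, of "a powr p"] by simp
  next
    case 3
    have weights: "1 - 1/v = 1/u" using uv by simp
    have rescale: "(x * c) powr p / x = x powr (p - 1) * c powr p" if "x > 0" "c \<ge> 0" for x c :: real
      using that by (simp add: powr_mult powr_diff)
    have "(a + b) powr p = ((1 - 1/v) *\<^sub>R (u * a) + (1/v) *\<^sub>R (v * b)) powr p"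
      using u v by (simp add: weights)
    also have "\<dots> \<le> (1 - 1/v) * (u * a) powr p + (1/v) * (v * b) powr p"
      using 3 u v \<open>1/v \<le> 1\<close> by (intro convex_onD[OF powr_convex[OF p]]) auto
    also have "\<dots> = u powr (p - 1) * a powr p + v powr (p - 1) * b powr p"
      using u v a b by (simp add: weights rescale)
    finally show ?thesis .
  qed
qed

lemma powr_weighted_succ:
  fixes n p :: real
  assumes "n > 0"
  shows "((n + 1) / n) powr (p - 1) * n powr p + (n + 1) powr (p - 1) = (n + 1) powr p"
proof -
  have split: "x powr p = x powr (p - 1) * x" if "x > 0" for x :: real
    using that by (simp add: powr_diff)
  have "((n + 1) / n) powr (p - 1) * n powr p = (n + 1) powr (p - 1) * n"
    using assms by (simp add: powr_divide split[of n])
  then show ?thesis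
    using split[of "n + 1"] assms by (simp add: algebra_simps)
qed

lemma abs_diff_powr_le:
  fixes x y p :: real
  assumes "p \<ge> 0"
  shows "\<bar>x - y\<bar> powr p \<le> 2 powr p * (\<bar>x\<bar> powr p + \<bar>y\<bar> powr p)"
proof -
  have "\<bar>x - y\<bar> powr p \<le> (2 * max \<bar>x\<bar> \<bar>y\<bar>) powr p"
    using assms by (intro powr_mono2) auto
  also have "\<dots> = 2 powr p * max \<bar>x\<bar> \<bar>y\<bar> powr p" by (simp add: powr_mult)
  also have "\<dots> \<le> 2 powr p * (\<bar>x\<bar> powr p + \<bar>y\<bar> powr p)"
    by (intro mult_left_mono) (auto simp: max_def)
  finally show ?thesis .
qed

lemma borel_measurable_translate_diff_powr [measurable]:
  fixes f :: "'g::{topological_group_add, second_countable_topology} \<Rightarrow> real"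
  assumes [measurable]: "f \<in> borel_measurable borel"
  shows "(\<lambda>h. ennreal (\<bar>f (a + h) - f (b + h)\<bar> powr p)) \<in> borel_measurable borel"
  by measurable

lemma lp_pow_diff_translate_add_le:
  fixes M :: "'g::{topological_group_add, second_countable_topology} measure"
  assumes H: "haar_measure M" and f[measurable]: "f \<in> borel_measurable borel" and p: "p \<ge> 1"
    and uv: "u > 0" "v > 0" "1/u + 1/v = 1"
  shows "lp_pow M p (\<lambda>h. f h - f (t + a + h))
    \<le> ennreal (u powr (p - 1)) * lp_pow M p (\<lambda>h. f h - f (a + h))
      + ennreal (v powr (p - 1)) * lp_pow M p (\<lambda>h. f h - f (t + h))"
proof -
  let ?d = "\<lambda>b c h. ennreal (\<bar>f (b + h) - f (c + h)\<bar> powr p)"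
  have d_meas: "?d b c \<in> borel_measurable M" for b c
    unfolding measurable_cong_sets[OF haar_measure_sets[OF H] refl] by measurable
  have "lp_pow M p (\<lambda>h. f h - f (t + a + h))
      \<le> (\<integral>\<^sup>+h. ennreal (u powr (p - 1)) * ?d 0 a h + ennreal (v powr (p - 1)) * ?d a (t + a) h \<partial>M)"
    unfolding lp_pow_def
  proof (intro nn_integral_mono)
    fix h
    have "\<bar>f h - f (t + a + h)\<bar> \<le> \<bar>f h - f (a + h)\<bar> + \<bar>f (a + h) - f (t + a + h)\<bar>"
      by simp
    then have "\<bar>f h - f (t + a + h)\<bar> powr p
        \<le> (\<bar>f h - f (a + h)\<bar> + \<bar>f (a + h) - f (t + a + h)\<bar>) powr p"
      using p by (intro powr_mono2) auto
    also have "\<dots> \<le> u powr (p - 1) * \<bar>f h - f (a + h)\<bar> powr p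
        + v powr (p - 1) * \<bar>f (a + h) - f (t + a + h)\<bar> powr p"
      using uv p by (intro powr_add_le_weighted) auto
    finally show "ennreal (\<bar>f h - f (t + a + h)\<bar> powr p)
        \<le> ennreal (u powr (p - 1)) * ?d 0 a h + ennreal (v powr (p - 1)) * ?d a (t + a) h"
      by (simp add: add.assoc ennreal_mult[symmetric] ennreal_plus[symmetric] del: ennreal_plus)
  qed
  also have "\<dots> = (\<integral>\<^sup>+h. ennreal (u powr (p - 1)) * ?d 0 a h \<partial>M)
      + (\<integral>\<^sup>+h. ennreal (v powr (p - 1)) * ?d a (t + a) h \<partial>M)"
    by (intro nn_integral_add borel_measurable_times_ennreal borel_measurable_const d_meas)
  also have "\<dots> = ennreal (u powr (p - 1)) * (\<integral>\<^sup>+h. ?d 0 a h \<partial>M)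
      + ennreal (v powr (p - 1)) * (\<integral>\<^sup>+h. ?d a (t + a) h \<partial>M)"
    by (simp only: nn_integral_cmult[OF d_meas])
  also have "(\<integral>\<^sup>+h. ?d a (t + a) h \<partial>M) = (\<integral>\<^sup>+h. ?d 0 t h \<partial>M)"
    using nn_integral_haar_left_translate[OF H borel_measurable_translate_diff_powr[OF f, of 0 t p], of a]
    by (simp add: add.assoc)
  finally show ?thesis
    by (simp add: lp_pow_def add.assoc)
qed

lemma lp_pow_diff_sum_list_le:
  fixes M :: "'g::{topological_group_add, second_countable_topology} measure"
  assumes H: "haar_measure M" and f: "f \<in> borel_measurable borel" and p: "p \<ge> 1"
    and B: "\<And>t. t \<in> set ws \<Longrightarrow> lp_pow M p (\<lambda>h. f h - f (t + h)) \<le> B"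
  shows "lp_pow M p (\<lambda>h. f h - f (sum_list ws + h)) \<le> ennreal (real (length ws) powr p) * B"
  using B
proof (induction ws)
  case Nil
  then show ?case by (simp add: lp_pow_def)
next
  case (Cons t ws)
  show ?case
  proof (cases "ws = []")
    case True
    then show ?thesis using Cons.prems by simp
  next
    case False
    define n where "n = real (length ws)"
    have n: "n > 0" using False by (simp add: n_def)
    let ?u = "(n + 1) / n" and ?v = "n + 1"
    have uv: "?u > 0" "?v > 0" "1 / ?u + 1 / ?v = 1" using n by (auto simp: field_simps)
    have "lp_pow M p (\<lambda>h. f h - f (sum_list (t # ws) + h))
        \<le> ennreal (?u powr (p - 1)) * lp_pow M p (\<lambda>h. f h - f (sum_list ws + h))
          + ennreal (?v powr (p - 1)) * lp_pow M p (\<lambda>h. f h - f (t + h))"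
      using lp_pow_diff_translate_add_le[OF H f p uv] by simp
    also have "\<dots> \<le> ennreal (?u powr (p - 1)) * (ennreal (n powr p) * B) + ennreal (?v powr (p - 1)) * B"
      using Cons by (intro add_mono mult_left_mono) (auto simp: n_def)
    also have "\<dots> = ennreal (?u powr (p - 1) * n powr p + ?v powr (p - 1)) * B"
      by (simp add: ennreal_plus ennreal_mult distrib_right mult.assoc)
    also have "\<dots> = ennreal ((n + 1) powr p) * B"
      by (simp only: powr_weighted_succ[OF n])
    also have "n + 1 = real (length (t # ws))"
      by (simp add: n_def)
    finally show ?thesis .
  qed
qed

lemma lp_pow_diff_ltrans_le:
  fixes M :: "'g::{topological_group_add, second_countable_topology} measure"
  assumes H: "haar_measure M" and f[measurable]: "f \<in> borel_measurable borel" and p: "p \<ge> 0"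
  shows "lp_pow M p (\<lambda>h. f h - ltrans s f h) \<le> ennreal (2 powr p) * (2 * lp_pow M p f)"
proof -
  let ?g = "\<lambda>c h. ennreal (\<bar>f (c + h)\<bar> powr p)"
  have g_borel: "?g c \<in> borel_measurable borel" for c
    by measurable
  then have g_meas: "?g c \<in> borel_measurable M" for c
    by (simp only: measurable_cong_sets[OF haar_measure_sets[OF H] refl])
  have "lp_pow M p (\<lambda>h. f h - ltrans s f h) \<le> (\<integral>\<^sup>+h. ennreal (2 powr p) * (?g 0 h + ?g (- s) h) \<partial>M)"
    unfolding lp_pow_def ltrans_def using abs_diff_powr_le[OF p]
    by (intro nn_integral_mono) (simp add: ennreal_mult[symmetric] ennreal_plus[symmetric] del: ennreal_plus)
  also have "\<dots> = ennreal (2 powr p) * ((\<integral>\<^sup>+h. ?g 0 h \<partial>M) + (\<integral>\<^sup>+h. ?g (- s) h \<partial>M))"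
    by (simp only: nn_integral_cmult[OF borel_measurable_add[OF g_meas g_meas]] nn_integral_add[OF g_meas g_meas])
  also have "\<dots> = ennreal (2 powr p) * (2 * lp_pow M p f)"
    using nn_integral_haar_left_translate[OF H g_borel[of 0], of "- s"] by (simp add: lp_pow_def mult_2)
  finally show ?thesis .
qed

lemma lp_pow_diff_le_grad_sup:
  fixes M :: "'g::{topological_group_add, second_countable_topology} measure"
  assumes H: "haar_measure M" and f: "f \<in> borel_measurable borel" and p: "p \<ge> 1"
    and fin: "lp_pow M p f < \<infinity>" and s: "s \<in> S"
  shows "lp_pow M p (\<lambda>h. f h - ltrans s f h) \<le> ennreal (grad_sup M S p f powr p)"
proof -
  define X where "X s = lp_pow M p (\<lambda>h. f h - ltrans s f h)" for s
  define K where "K = ennreal (2 powr p) * (2 * lp_pow M p f)"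
  have XK: "X s \<le> K" for s
    unfolding X_def K_def using p by (intro lp_pow_diff_ltrans_le[OF H f]) simp
  have K: "K < \<infinity>" using fin by (simp add: K_def ennreal_mult_less_top)
  have norm: "lp_norm M p (\<lambda>h. f h - ltrans s f h) = enn2real (X s) powr (1 / p)" for s
    by (simp add: lp_norm_def X_def)
  have "bdd_above ((\<lambda>s. lp_norm M p (\<lambda>h. f h - ltrans s f h)) ` S)"
    unfolding norm using XK K p
    by (intro bdd_aboveI2[where M="enn2real K powr (1 / p)"] powr_mono2 enn2real_mono) auto
  then have "lp_norm M p (\<lambda>h. f h - ltrans s f h) \<le> grad_sup M S p f"
    unfolding grad_sup_def using s by (rule cSUP_upper2) simp
  then have "(enn2real (X s) powr (1 / p)) powr p \<le> grad_sup M S p f powr p"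
    using p by (intro powr_mono2) (auto simp: norm)
  then have "enn2real (X s) \<le> grad_sup M S p f powr p"
    using p by (simp add: powr_powr)
  moreover have "X s = ennreal (enn2real (X s))"
    using le_less_trans[OF XK K] by (simp add: less_top)
  ultimately show ?thesis
    unfolding X_def by (metis ennreal_leI)
qed

lemma lp_pow_diff_generator_le:
  fixes M :: "'g::{topological_group_add, second_countable_topology} measure"
  assumes H: "haar_measure M" and f: "f \<in> borel_measurable borel" and p: "p \<ge> 1"
    and fin: "lp_pow M p f < \<infinity>" and t: "t \<in> S \<union> uminus ` S"
  shows "lp_pow M p (\<lambda>h. f h - f (t + h)) \<le> ennreal (grad_sup M S p f powr p)"
  using t
proof
  assume "t \<in> S"
  have "lp_pow M p (\<lambda>h. f h - f (t + h)) = lp_pow M p (\<lambda>h. f h - ltrans t f h)"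
    using nn_integral_haar_left_translate[OF H borel_measurable_translate_diff_powr[OF f, of 0 t p], of "- t"]
    by (simp add: lp_pow_def ltrans_def add.assoc[symmetric] abs_minus_commute)
  also have "\<dots> \<le> ennreal (grad_sup M S p f powr p)"
    by (rule lp_pow_diff_le_grad_sup[OF H f p fin \<open>t \<in> S\<close>])
  finally show ?thesis .
next
  assume "t \<in> uminus ` S"
  then obtain s where "s \<in> S" "t = - s" by blast
  then show ?thesis
    using lp_pow_diff_le_grad_sup[OF H f p fin] by (simp add: ltrans_def)
qed

lemma lp_pow_diff_word_length_le:
  fixes M :: "'g::{topological_group_add, second_countable_topology} measure"
  assumes H: "haar_measure M" and f: "f \<in> borel_measurable borel" and p: "p \<ge> 1"
    and fin: "lp_pow M p f < \<infinity>" and gen: "generates S"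
  shows "lp_pow M p (\<lambda>h. f h - f (a + h))
    \<le> ennreal (real (word_length S a) powr p) * ennreal (grad_sup M S p f powr p)"
proof -
  obtain n where "a \<in> words S n" using gen unfolding generates_def by blast
  then have "a \<in> words S (word_length S a)" unfolding word_length_def by (rule LeastI)
  then obtain ws where ws: "a = sum_list ws" "length ws = word_length S a" "set ws \<subseteq> S \<union> uminus ` S"
    unfolding words_def by blast
  have "lp_pow M p (\<lambda>h. f h - f (sum_list ws + h))
      \<le> ennreal (real (length ws) powr p) * ennreal (grad_sup M S p f powr p)"
    using ws(3) by (intro lp_pow_diff_sum_list_le[OF H f p lp_pow_diff_generator_le[OF H f p fin]]) auto
  then show ?thesis
    using ws(1,2) by simp
qed

section \<open>Measure equivalence couplings\<close>

lemma measure_iso_action_inj: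
  assumes "measure_iso (L \<Otimes>\<^sub>M N) \<mu> (\<lambda>(h, x). act h x)" and "space L = UNIV"
    and "x \<in> space N" and "y \<in> space N" and "act h x = act h' y"
  shows "h = h' \<and> x = y"
  using assms unfolding measure_iso_def bij_betw_def inj_on_def
  by (auto simp: space_pair_measure)

lemma measure_iso_action_surj:
  assumes "measure_iso (L \<Otimes>\<^sub>M N) \<mu> (\<lambda>(h, x). act h x)" and "space L = UNIV"
    and "\<omega> \<in> space \<mu>"
  obtains h x where "x \<in> space N" "\<omega> = act h x"
proof -
  have "\<omega> \<in> (\<lambda>(h, x). act h x) ` (UNIV \<times> space N)"
    using assms unfolding measure_iso_def bij_betw_def by (simp add: space_pair_measure)
  then show ?thesis using that by auto
qed

lemma ftilde_hact:
  assumes iso: "measure_iso (L \<Otimes>\<^sub>M N) \<mu> (\<lambda>(h, x). hact h x)" and L: "space L = UNIV"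
    and y: "y \<in> space N"
  shows "ftilde hact (space N) f (hact h y) = f (- h)"
proof -
  have "(THE h'. \<exists>x\<in>space N. hact h y = hact h' x) = h"
    using y measure_iso_action_inj[OF iso L y] by (intro the_equality) auto
  then show ?thesis by (simp add: ftilde_def)
qed

lemma ftilde_measurable:
  fixes f :: "'h::{topological_group_add, second_countable_topology} \<Rightarrow> real"
  assumes iso: "measure_iso (L \<Otimes>\<^sub>M N) \<mu> (\<lambda>(h, x). hact h x)" and L: "sets L = sets borel"
    and f: "f \<in> borel_measurable borel"
  shows "ftilde hact (space N) f \<in> borel_measurable \<mu>"
proof -
  have UNIV: "space L = UNIV" using sets_eq_imp_space_eq[OF L] by simp
  define \<psi> where "\<psi> = the_inv_into (space (L \<Otimes>\<^sub>M N)) (\<lambda>(h, x). hact h x)"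
  have bij: "bij_betw (\<lambda>(h, x). hact h x) (space (L \<Otimes>\<^sub>M N)) (space \<mu>)"
    and \<psi>: "\<psi> \<in> \<mu> \<rightarrow>\<^sub>M L \<Otimes>\<^sub>M N"
    using iso by (auto simp: measure_iso_def \<psi>_def)
  have eq: "ftilde hact (space N) f \<omega> = f (- fst (\<psi> \<omega>))" if "\<omega> \<in> space \<mu>" for \<omega>
  proof -
    have "\<psi> \<omega> \<in> space (L \<Otimes>\<^sub>M N)" using \<psi> that by (rule measurable_space)
    moreover have "\<omega> = hact (fst (\<psi> \<omega>)) (snd (\<psi> \<omega>))"
      using f_the_inv_into_f_bij_betw[OF bij, of \<omega>] that by (simp add: \<psi>_def case_prod_beta)
    ultimately show ?thesis
      using ftilde_hact[OF iso UNIV] by (auto simp: space_pair_measure)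
  qed
  have "(\<lambda>\<omega>. fst (\<psi> \<omega>)) \<in> borel_measurable \<mu>"
    using measurable_compose[OF \<psi> measurable_fst] by (simp only: measurable_cong_sets[OF refl L])
  then have "(\<lambda>\<omega>. f (- fst (\<psi> \<omega>))) \<in> borel_measurable \<mu>"
    by (intro measurable_compose[OF _ f] borel_measurable_uminus_group)
  then show ?thesis
    by (simp only: measurable_cong[OF eq])
qed

lemma cocycle_eq:
  assumes C: "me_coupling lG lH \<mu> gact hact nuG nuH" and L: "space lH = UNIV"
    and y0: "y0 \<in> space nuH" and eq: "gact k y = hact h0 y0"
  shows "cocycle gact hact (space nuH) k y = - h0"
  unfolding cocycle_def
proof (rule the_equality)
  have act: "\<And>\<omega>. \<omega> \<in> space \<mu> \<Longrightarrow> hact 0 \<omega> = \<omega>"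
      "\<And>g h \<omega>. \<omega> \<in> space \<mu> \<Longrightarrow> hact (g + h) \<omega> = hact g (hact h \<omega>)"
    and sub: "space nuH \<subseteq> space \<mu>"
    and iso: "measure_iso (lH \<Otimes>\<^sub>M nuH) \<mu> (\<lambda>(h, x). hact h x)"
    using C by (auto simp: me_coupling_def mp_action_def)
  show "hact (- h0) (gact k y) \<in> space nuH"
    using y0 sub act[of y0] act(2)[of y0 "- h0" h0] by (auto simp: eq)
  fix a assume a: "hact a (gact k y) \<in> space nuH"
  have "hact (a + h0) y0 = hact a (gact k y)"
    using y0 sub act(2) by (auto simp: eq)
  also have "\<dots> = hact 0 (hact a (gact k y))"
    using a sub act(1) by auto
  finally have "a + h0 = 0"
    using measure_iso_action_inj[OF iso L y0 a] by blast
  then show "a = - h0"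
    by (simp add: eq_neg_iff_add_eq_0)
qed

lemma ftilde_gact_hact:
  assumes C: "me_coupling lG lH \<mu> gact hact nuG nuH" and L: "space lH = UNIV"
    and y: "y \<in> space nuH"
  shows "ftilde hact (space nuH) f (gact k (hact h y)) = f (cocycle gact hact (space nuH) k y + - h)"
proof -
  have mp: "mp_action \<mu> gact" "mp_action \<mu> hact" and sub: "space nuH \<subseteq> space \<mu>"
    and iso: "measure_iso (lH \<Otimes>\<^sub>M nuH) \<mu> (\<lambda>(h, x). hact h x)"
    and comm: "\<And>g h \<omega>. \<omega> \<in> space \<mu> \<Longrightarrow> gact g (hact h \<omega>) = hact h (gact g \<omega>)"
    using C by (simp_all add: me_coupling_def)
  have y\<mu>: "y \<in> space \<mu>" using y sub by auto
  moreover have "gact k \<in> \<mu> \<rightarrow>\<^sub>M \<mu>"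
    using mp(1) by (simp add: mp_action_def)
  ultimately have "gact k y \<in> space \<mu>"
    by (simp add: measurable_space)
  then obtain h0 y0 where y0: "y0 \<in> space nuH" and eq: "gact k y = hact h0 y0"
    using measure_iso_action_surj[OF iso L] by blast
  have "gact k (hact h y) = hact (h + h0) y0"
    using comm[OF y\<mu>] mp(2) y0 sub by (auto simp: eq mp_action_def)
  then show ?thesis
    using ftilde_hact[OF iso L y0] cocycle_eq[OF C L y0 eq] by (simp add: minus_add)
qed

lemma nn_integral_measure_iso_action:
  assumes iso: "measure_iso (L \<Otimes>\<^sub>M N) \<mu> (\<lambda>(g, x). act g x)"
    and "sigma_finite_measure L" and "sigma_finite_measure N" and E: "E \<in> borel_measurable \<mu>"
  shows "(\<integral>\<^sup>+x. (\<integral>\<^sup>+g. E (act g x) \<partial>L) \<partial>N) = (\<integral>\<^sup>+\<omega>. E \<omega> \<partial>\<mu>)"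
proof -
  interpret pair_sigma_finite L N
    using assms(2,3) by (simp add: pair_sigma_finite_def)
  have act: "(\<lambda>(g, x). act g x) \<in> L \<Otimes>\<^sub>M N \<rightarrow>\<^sub>M \<mu>"
    and distr: "distr (L \<Otimes>\<^sub>M N) \<mu> (\<lambda>(g, x). act g x) = \<mu>"
    using iso by (auto simp: measure_iso_def)
  have "(\<integral>\<^sup>+x. (\<integral>\<^sup>+g. E (act g x) \<partial>L) \<partial>N) = (\<integral>\<^sup>+q. E (case q of (g, x) \<Rightarrow> act g x) \<partial>(L \<Otimes>\<^sub>M N))"
    using nn_integral_snd[OF measurable_compose[OF act E]] by simp
  also have "\<dots> = (\<integral>\<^sup>+\<omega>. E \<omega> \<partial>\<mu>)"
    using nn_integral_distr[OF act, of E] E distr by simp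
  finally show ?thesis .
qed

lemma nn_integral_lp_pow_fx_diff_le:
  fixes lG :: "'g::{topological_group_add, second_countable_topology} measure"
    and lH :: "'h::{topological_group_add, second_countable_topology} measure"
  assumes C: "me_coupling lG lH \<mu> gact hact nuG nuH" and UH: "unimodular_haar lH"
    and SFG: "sigma_finite_measure lG" and SFH: "sigma_finite_measure lH"
    and f[measurable]: "f \<in> borel_measurable borel" and p: "p \<ge> 1"
    and fin: "lp_pow lH p f < \<infinity>" and gen: "generates SH"
  shows "(\<integral>\<^sup>+x. lp_pow lG p (\<lambda>g. fx gact hact (space nuH) f x g - ltrans s (fx gact hact (space nuH) f x) g) \<partial>nuG)
    \<le> (\<integral>\<^sup>+y. ennreal (real (word_length SH (cocycle gact hact (space nuH) (- s) y)) powr p) \<partial>nuH)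
      * ennreal (grad_sup lH SH p f powr p)"
proof -
  define F where "F = ftilde hact (space nuH) f"
  define E where "E \<omega> = ennreal (\<bar>F \<omega> - F (gact (- s) \<omega>)\<bar> powr p)" for \<omega>
  define \<alpha> where "\<alpha> = cocycle gact hact (space nuH) (- s)"
  have HH: "haar_measure lH" using UH by (simp add: unimodular_haar_def)
  have mpG: "mp_action \<mu> gact" and sub: "space nuG \<subseteq> space \<mu>"
    and fin_nu: "finite_measure nuG" "finite_measure nuH"
    and isoG: "measure_iso (lG \<Otimes>\<^sub>M nuG) \<mu> (\<lambda>(g, x). gact g x)"
    and isoH: "measure_iso (lH \<Otimes>\<^sub>M nuH) \<mu> (\<lambda>(h, x). hact h x)"
    using C by (simp_all add: me_coupling_def)
  have sf_nu: "sigma_finite_measure nuG" "sigma_finite_measure nuH"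
    using fin_nu by (simp_all add: finite_measure_def)
  have [measurable]: "gact (- s) \<in> \<mu> \<rightarrow>\<^sub>M \<mu>" "F \<in> borel_measurable \<mu>"
    using mpG ftilde_measurable[OF isoH haar_measure_sets[OF HH] f]
    by (simp_all add: mp_action_def F_def)
  have E: "E \<in> borel_measurable \<mu>"
    unfolding E_def by measurable
  have "(\<integral>\<^sup>+x. lp_pow lG p (\<lambda>g. fx gact hact (space nuH) f x g - ltrans s (fx gact hact (space nuH) f x) g) \<partial>nuG)
      = (\<integral>\<^sup>+x. (\<integral>\<^sup>+g. E (gact g x) \<partial>lG) \<partial>nuG)"
    using sub mpG by (intro nn_integral_cong) (auto simp: lp_pow_def fx_def ltrans_def E_def F_def mp_action_def)
  also have "\<dots> = (\<integral>\<^sup>+\<omega>. E \<omega> \<partial>\<mu>)"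
    by (rule nn_integral_measure_iso_action[OF isoG SFG sf_nu(1) E])
  also have "\<dots> = (\<integral>\<^sup>+y. (\<integral>\<^sup>+h. E (hact h y) \<partial>lH) \<partial>nuH)"
    by (rule nn_integral_measure_iso_action[OF isoH SFH sf_nu(2) E, symmetric])
  also have "\<dots> = (\<integral>\<^sup>+y. lp_pow lH p (\<lambda>h. f h - f (\<alpha> y + h)) \<partial>nuH)"
  proof (rule nn_integral_cong)
    fix y assume y: "y \<in> space nuH"
    have "(\<integral>\<^sup>+h. E (hact h y) \<partial>lH) = (\<integral>\<^sup>+h. ennreal (\<bar>f (0 + - h) - f (\<alpha> y + - h)\<bar> powr p) \<partial>lH)"
      using ftilde_hact[OF isoH haar_measure_space[OF HH] y] ftilde_gact_hact[OF C haar_measure_space[OF HH] y]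
      by (simp add: E_def F_def \<alpha>_def)
    also have "\<dots> = lp_pow lH p (\<lambda>h. f h - f (\<alpha> y + h))"
      using nn_integral_unimodular_uminus[OF UH SFH borel_measurable_translate_diff_powr[OF f, of 0 "\<alpha> y" p]]
      by (simp add: lp_pow_def)
    finally show "(\<integral>\<^sup>+h. E (hact h y) \<partial>lH) = lp_pow lH p (\<lambda>h. f h - f (\<alpha> y + h))" .
  qed
  also have "\<dots> \<le> (\<integral>\<^sup>+y. ennreal (real (word_length SH (\<alpha> y)) powr p) * ennreal (grad_sup lH SH p f powr p) \<partial>nuH)"
    by (intro nn_integral_mono lp_pow_diff_word_length_le[OF HH f p fin gen])
  also have "\<dots> = (\<integral>\<^sup>+y. ennreal (real (word_length SH (\<alpha> y)) powr p) \<partial>nuH) * ennreal (grad_sup lH SH p f powr p)"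
    by (rule nn_integral_multc_finite) simp
  finally show ?thesis
    by (simp only: \<alpha>_def)
qed

lemma borel_measurable_lp_pow_fx_diff:
  fixes lG :: "'g::{topological_group_add, second_countable_topology} measure"
  assumes C: "me_coupling lG lH \<mu> gact hact nuG nuH" and HG: "haar_measure lG"
    and "sigma_finite_measure lG" and F[measurable]: "ftilde hact (space nuH) f \<in> borel_measurable \<mu>"
  shows "(\<lambda>(x, s). lp_pow lG p (\<lambda>g. fx gact hact (space nuH) f x g - ltrans s (fx gact hact (space nuH) f x) g))
    \<in> borel_measurable (nuG \<Otimes>\<^sub>M lG)"
proof -
  interpret sigma_finite_measure lG by fact
  have S: "sets lG = sets borel" by (rule haar_measure_sets[OF HG])
  have "(\<lambda>(g, x). gact g x) \<in> lG \<Otimes>\<^sub>M nuG \<rightarrow>\<^sub>M \<mu>"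
    using C by (simp add: me_coupling_def measure_iso_def)
  then have action: "(\<lambda>(g, x). gact g x) \<in> borel \<Otimes>\<^sub>M nuG \<rightarrow>\<^sub>M \<mu>"
    by (simp only: measurable_cong_sets[OF sets_pair_measure_cong[OF S refl] refl])
  have [measurable (raw)]: "(\<lambda>q. gact (a q) (x q)) \<in> N \<rightarrow>\<^sub>M \<mu>"
    if "a \<in> N \<rightarrow>\<^sub>M borel" "x \<in> N \<rightarrow>\<^sub>M nuG" for N :: "(('w \<times> 'g) \<times> 'g) measure" and a x
    using measurable_compose[OF measurable_Pair[OF that] action] by simp
  have "(\<lambda>q. ennreal (\<bar>ftilde hact (space nuH) f (gact (snd q) (fst (fst q)))
      - ftilde hact (space nuH) f (gact (- snd (fst q) + snd q) (fst (fst q)))\<bar> powr p))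
      \<in> borel_measurable ((nuG \<Otimes>\<^sub>M lG) \<Otimes>\<^sub>M lG)"
    unfolding measurable_cong_sets[OF sets_pair_measure_cong[OF sets_pair_measure_cong[OF refl S] S] refl]
    by measurable
  from borel_measurable_nn_integral_fst[OF this] show ?thesis
    by (simp add: lp_pow_def fx_def ltrans_def case_prod_beta')
qed

lemma nn_integral_indicator_swap_le:
  assumes "sigma_finite_measure N" and "sigma_finite_measure L" and S: "S \<in> sets L"
    and D: "(\<lambda>(x, s). D x s) \<in> borel_measurable (N \<Otimes>\<^sub>M L)"
    and bound: "\<And>s. s \<in> S \<Longrightarrow> (\<integral>\<^sup>+x. D x s \<partial>N) \<le> K s * c" and c: "c \<noteq> \<infinity>"
  shows "(\<integral>\<^sup>+x. (\<integral>\<^sup>+s. indicator S s * D x s \<partial>L) \<partial>N) \<le> (\<integral>\<^sup>+s. indicator S s * K s \<partial>L) * c"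
proof -
  interpret pair_sigma_finite N L
    using assms(1,2) by (simp add: pair_sigma_finite_def)
  have "(\<lambda>(x, s). indicator S s * D x s) \<in> borel_measurable (N \<Otimes>\<^sub>M L)"
    using S D by measurable
  then have "(\<integral>\<^sup>+x. (\<integral>\<^sup>+s. indicator S s * D x s \<partial>L) \<partial>N)
      = (\<integral>\<^sup>+s. (\<integral>\<^sup>+x. indicator S s * D x s \<partial>N) \<partial>L)"
    by (rule Fubini'[symmetric])
  also have "\<dots> = (\<integral>\<^sup>+s. indicator S s * (\<integral>\<^sup>+x. D x s \<partial>N) \<partial>L)"
    by (intro nn_integral_cong nn_integral_cmult_finite) (simp add: indicator_def)
  also have "\<dots> \<le> (\<integral>\<^sup>+s. indicator S s * K s * c \<partial>L)"
    using bound by (intro nn_integral_mono) (simp add: indicator_def mult.assoc)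
  also have "\<dots> = (\<integral>\<^sup>+s. indicator S s * K s \<partial>L) * c"
    by (rule nn_integral_multc_finite[OF c])
  finally show ?thesis .
qed

theorem mainTheorem13:
  fixes lG :: "'g::{topological_group_add, t2_space, second_countable_topology} measure"
    and lH :: "'h::{topological_group_add, t2_space, second_countable_topology} measure"
    and \<mu> :: "'w measure"
    and gact :: "'g \<Rightarrow> 'w \<Rightarrow> 'w" and hact :: "'h \<Rightarrow> 'w \<Rightarrow> 'w"
    and nuG nuH :: "'w measure"
    and SG :: "'g set" and SH :: "'h set"
    and p :: real and f :: "'h \<Rightarrow> real"
  assumes "lcsc_group TYPE('g)" and "lcsc_group TYPE('h)"
    and "non_discrete_group TYPE('g)" and "non_discrete_group TYPE('h)"
    and "unimodular_haar lG" and "unimodular_haar lH"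
    and "compact_generating_set SG" and "compact_generating_set SH"
    and "me_coupling lG lH \<mu> gact hact nuG nuH"
    and "p \<ge> 1"
    and Cp: "(\<integral>\<^sup>+ s. indicator SG s *
               (\<integral>\<^sup>+ x. ennreal (real (word_length SH (cocycle gact hact (space nuH) (- s) x)) powr p) \<partial>nuH)
             \<partial>lG) < \<infinity>"
    and "f \<in> borel_measurable borel"
    and "lp_pow lH p f < \<infinity>"
    and "emeasure lH {h. f h \<noteq> 0} < \<infinity>"
  shows "(\<integral>\<^sup>+ x. grad_int_pow lG SG p (fx gact hact (space nuH) f x) \<partial>nuG)
           \<le> (\<integral>\<^sup>+ s. indicator SG s *
               (\<integral>\<^sup>+ x. ennreal (real (word_length SH (cocycle gact hact (space nuH) (- s) x)) powr p) \<partial>nuH)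
             \<partial>lG) * ennreal (grad_sup lH SH p f powr p)"
proof -
  have HG: "haar_measure lG" and HH: "haar_measure lH"
    using assms(5,6) by (simp_all add: unimodular_haar_def)
  have SFG: "sigma_finite_measure lG" and SFH: "sigma_finite_measure lH"
    using haar_measure_sigma_finite assms(1,2) HG HH by blast+
  have SG: "SG \<in> sets lG" and gen: "generates SH"
    using assms(7,8) haar_measure_sets[OF HG] by (auto simp: compact_generating_set_def borel_compact)
  have sf: "sigma_finite_measure nuG" and iso: "measure_iso (lH \<Otimes>\<^sub>M nuH) \<mu> (\<lambda>(h, x). hact h x)"
    using assms(9) by (simp_all add: me_coupling_def finite_measure_def)
  have F: "ftilde hact (space nuH) f \<in> borel_measurable \<mu>"
    by (rule ftilde_measurable[OF iso haar_measure_sets[OF HH] assms(12)])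
  show ?thesis
    unfolding grad_int_pow_def
    using nn_integral_lp_pow_fx_diff_le[OF assms(9) assms(6) SFG SFH assms(12,10,13) gen]
    by (intro nn_integral_indicator_swap_le[OF sf SFG SG borel_measurable_lp_pow_fx_diff[OF assms(9) HG SFG F]])
      simp_all
qed

end
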